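(* Let $A>0$ and let $k_0$ be the largest integer strictly smaller than $\sigma$. Let $\phi(\cdot;A)$ be the solution of $$(\phi^m)''+\frac{N-1}{\xi}(\phi^m)'+\alpha\phi+\beta\xi\phi'=0,\qquad \phi(0)=A,\ \phi'(0)=0,$$ and let $B_j$ be the Taylor coefficients of $\phi^m(\cdot;A)$ at $\xi=0$. Then, as $\xi\to0$, $$f^m(\xi;A)=\sum_{j=0}^{k_0+2}B_j\xi^j+\frac{A^p}{(\sigma+2)(\sigma+N)}\xi^{\sigma+2}+o(\xi^{\sigma+2})\quad\text{if }\sigma\notin\mathbb{N},$$ and $$f^m(\xi;A)=\sum_{j=0}^{k_0+3}B_j\xi^j+\frac{A^p}{(\sigma+2)(\sigma+N)}\xi^{\sigma+2}+o(\xi^{\sigma+2})\quad\text{if }\sigma\in\mathbb{N}\ (k_0=\sigma-1).$$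
   Context: Let $N\geq1$, $m>1$, $\sigma>0$, $p>m$, $L=\sigma(m-1)+2(p-1)$, $\alpha=(\sigma+2)/L$, $\beta=(p-m)/L$. For $A>0$, $f(\cdot;A)$ denotes the unique solution of $$(f^m)''+\frac{N-1}{\xi}(f^m)'+\alpha f+\beta\xi f'-\xi^{\sigma}f^p=0,\qquad f(0)=A,\ f'(0)=0,$$ positive on a maximal interval $[0,\xi_{\max}(A))$ with $f^m\in C^2$ there. *)

theory Defs
  imports "HOL-Analysis.Analysis" "HOL-Library.Landau_Symbols"
begin

definition Lc :: "real \<Rightarrow> real \<Rightarrow> real \<Rightarrow> real" where
  "Lc m \<sigma> p = \<sigma> * (m - 1) + 2 * (p - 1)"

definition alpha :: "real \<Rightarrow> real \<Rightarrow> real \<Rightarrow> real" where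
  "alpha m \<sigma> p = (\<sigma> + 2) / Lc m \<sigma> p"

definition beta :: "real \<Rightarrow> real \<Rightarrow> real \<Rightarrow> real" where
  "beta m \<sigma> p = (p - m) / Lc m \<sigma> p"

text \<open>\<open>is_profile N m \<sigma> p c A f xm\<close>: \<open>f\<close> is a solution on \<open>[0,xm)\<close> of
  \<open>(f^m)'' + (N-1)/\<xi> (f^m)' + \<alpha> f + \<beta> \<xi> f' - c \<xi>^\<sigma> f^p = 0\<close>,
  \<open>f(0) = A\<close>, \<open>f'(0) = 0\<close>, positive on \<open>[0,xm)\<close>, with \<open>f^m \<in> C^2([0,xm))\<close>
  (one-sided derivatives at 0).  With \<open>c = 1\<close> this is the equation for \<open>f\<close>,
  with \<open>c = 0\<close> the equation for \<open>\<phi>\<close>.\<close>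
definition is_profile ::
  "nat \<Rightarrow> real \<Rightarrow> real \<Rightarrow> real \<Rightarrow> real \<Rightarrow> real \<Rightarrow> (real \<Rightarrow> real) \<Rightarrow> real \<Rightarrow> bool" where
  "is_profile N m \<sigma> p c A f xm \<longleftrightarrow>
     0 < xm \<and> f 0 = A \<and> (\<forall>\<xi>\<in>{0..<xm}. 0 < f \<xi>) \<and>
     (\<exists>f1 u1 u2.
        f1 0 = 0 \<and>
        (\<forall>\<xi>\<in>{0..<xm}. (f has_real_derivative f1 \<xi>) (at \<xi> within {0..<xm})) \<and>
        (\<forall>\<xi>\<in>{0..<xm}. ((\<lambda>x. f x powr m) has_real_derivative u1 \<xi>) (at \<xi> within {0..<xm})) \<and>
        (\<forall>\<xi>\<in>{0..<xm}. (u1 has_real_derivative u2 \<xi>) (at \<xi> within {0..<xm})) \<and>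
        continuous_on {0..<xm} u2 \<and>
        (\<forall>\<xi>\<in>{0<..<xm}.
           u2 \<xi> + (real N - 1) / \<xi> * u1 \<xi> + alpha m \<sigma> p * f \<xi>
             + beta m \<sigma> p * \<xi> * f1 \<xi> - c * \<xi> powr \<sigma> * f \<xi> powr p = 0))"

definition taylor_coeff0 :: "(real \<Rightarrow> real) \<Rightarrow> nat \<Rightarrow> real" where
  "taylor_coeff0 g j =
     (((\<lambda>h x. vector_derivative h (at x within {0..})) ^^ j) g 0) / fact j"

end

theory Submission
  imports Defs
begin

text \<open>
  \<phi>^m is smooth up to \<xi> = 0. Its equation reads (\<xi>^(N-1) (\<phi>^m)')' = \<xi>^(N-1) R with R built
  from \<phi> and (\<phi>^m)' alone, so (\<phi>^m)'' = R - (N-1) T_N R for the averaging operator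
  T_n R(\<xi>) = \<xi>^(-n) \<integral>_0^\<xi> s^(n-1) R(s) ds. As T_n preserves C^k, every derivative gained by
  (\<phi>^m)' passes to (\<phi>^m)''; hence \<phi>^m is its Taylor polynomial of degree K up to O(\<xi>^(K+1)),
  for every K.

  For D = f^m - \<phi>^m the difference of the fluxes, E = \<xi>^(N-1) D' + \<beta> \<xi>^N (f - \<phi>), satisfies
  E' = \<xi>^(N-1) (\<xi>^\<sigma> f^p + (\<beta> N - \<alpha>) (f - \<phi>)), while |f - \<phi>| \<le> L |D| near 0. Integrating
  twice, the f - \<phi> terms come with an extra factor \<xi>^2 and can be absorbed: first
  D = O(\<xi>^(\<sigma>+2)), and then, since f^p \<rightarrow> A^p, D = A^p \<xi>^(\<sigma>+2) / ((\<sigma>+2)(\<sigma>+N)) + o(\<xi>^(\<sigma>+2)).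
  A Taylor polynomial of \<phi>^m of degree K with K + 1 > \<sigma> + 2 accounts for the rest.
\<close>

fun Ck_on :: "nat \<Rightarrow> real set \<Rightarrow> (real \<Rightarrow> real) \<Rightarrow> bool" where
  "Ck_on 0 S h \<longleftrightarrow> continuous_on S h"
| "Ck_on (Suc k) S h \<longleftrightarrow>
     (\<exists>h'. (\<forall>x\<in>S. (h has_real_derivative h' x) (at x within S)) \<and> Ck_on k S h')"

lemma Ck_on_imp_continuous_on: "Ck_on k S h \<Longrightarrow> continuous_on S h"
  by (cases k) (auto intro: DERIV_continuous_on)

lemma Ck_on_SucD: "Ck_on (Suc k) S h \<Longrightarrow> Ck_on k S h"
proof (induction k arbitrary: h)
  case 0
  then show ?case by (auto intro: DERIV_continuous_on)
next
  case (Suc k)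
  then show ?case by (metis Ck_on.simps(2))
qed

lemma Ck_on_cong: "Ck_on k S h \<Longrightarrow> (\<And>x. x \<in> S \<Longrightarrow> h x = g x) \<Longrightarrow> Ck_on k S g"
proof (induction k arbitrary: h g)
  case 0
  then show ?case using continuous_on_cong by force
next
  case (Suc k)
  then obtain h' where h': "\<forall>x\<in>S. (h has_real_derivative h' x) (at x within S)" "Ck_on k S h'"
    by auto
  have "\<forall>x\<in>S. (g has_real_derivative h' x) (at x within S)"
    using h'(1) Suc.prems(2) by (metis has_field_derivative_transform_within zero_less_one)
  with h'(2) show ?case by auto
qed

lemma Ck_on_const: "Ck_on k S (\<lambda>x. c)"
proof (induction k arbitrary: c)
  case 0
  then show ?case by simp
next
  case (Suc k)
  then show ?case by (auto intro!: exI[of _ "\<lambda>x. 0"] derivative_eq_intros)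
qed

lemma Ck_on_ident: "Ck_on k S (\<lambda>x. x)"
  by (cases k) (auto intro!: exI[of _ "\<lambda>x. 1"] derivative_eq_intros Ck_on_const continuous_intros)

lemma Ck_on_add: "Ck_on k S f \<Longrightarrow> Ck_on k S g \<Longrightarrow> Ck_on k S (\<lambda>x. f x + g x)"
proof (induction k arbitrary: f g)
  case 0
  then show ?case by (auto intro: continuous_intros)
next
  case (Suc k)
  then obtain f' g' where "\<forall>x\<in>S. (f has_real_derivative f' x) (at x within S)" "Ck_on k S f'"
    "\<forall>x\<in>S. (g has_real_derivative g' x) (at x within S)" "Ck_on k S g'" by auto
  with Suc.IH show ?case
    by (auto intro!: exI[of _ "\<lambda>x. f' x + g' x"] derivative_eq_intros)
qed

lemma Ck_on_mult: "Ck_on k S f \<Longrightarrow> Ck_on k S g \<Longrightarrow> Ck_on k S (\<lambda>x. f x * g x)"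
proof (induction k arbitrary: f g)
  case 0
  then show ?case by (auto intro: continuous_intros)
next
  case (Suc k)
  then obtain f' g' where d: "\<forall>x\<in>S. (f has_real_derivative f' x) (at x within S)" "Ck_on k S f'"
    "\<forall>x\<in>S. (g has_real_derivative g' x) (at x within S)" "Ck_on k S g'" by auto
  have "Ck_on k S (\<lambda>x. f' x * g x + f x * g' x)"
    using Suc d Ck_on_SucD Ck_on_add by metis
  with d show ?case
    by (auto intro!: exI[of _ "\<lambda>x. f' x * g x + f x * g' x"] derivative_eq_intros)
qed

lemma Ck_on_cmult: "Ck_on k S f \<Longrightarrow> Ck_on k S (\<lambda>x. c * f x)"
  using Ck_on_mult[OF Ck_on_const] by blast

lemma Ck_on_diff: "Ck_on k S f \<Longrightarrow> Ck_on k S g \<Longrightarrow> Ck_on k S (\<lambda>x. f x - g x)"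
  using Ck_on_add[of k S f "\<lambda>x. (-1) * g x"] Ck_on_cmult[of k S g "-1"] by simp

lemma Ck_on_powr:
  "Ck_on k S h \<Longrightarrow> (\<And>x. x \<in> S \<Longrightarrow> h x > 0) \<Longrightarrow> Ck_on k S (\<lambda>x. h x powr c)"
proof (induction k arbitrary: c)
  case 0
  then show ?case by (auto intro!: continuous_intros simp: less_imp_neq[symmetric])
next
  case (Suc k)
  then obtain h' where d: "\<forall>x\<in>S. (h has_real_derivative h' x) (at x within S)" "Ck_on k S h'"
    by auto
  have "Ck_on k S (\<lambda>x. c * (h x powr (c - 1) * h' x))"
    using Suc d Ck_on_SucD Ck_on_mult Ck_on_cmult by metis
  moreover have "\<forall>x\<in>S. ((\<lambda>x. h x powr c) has_real_derivative c * (h x powr (c - 1) * h' x))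
      (at x within S)"
    using d(1) Suc.prems(2) by (auto intro!: derivative_eq_intros)
  ultimately show ?case by auto
qed

lemma at_0_within_Ico: "0 < d \<Longrightarrow> at 0 within {0..<d} = at_right (0::real)"
  by (rule at_within_nhd[of _ "{..<d}"]) auto

lemma at_within_Ico_interior: "0 < x \<Longrightarrow> x < d \<Longrightarrow> at x within {0..<d} = at (x::real)"
  by (rule at_within_interior) auto

lemma at_within_atLeast_eq_Ico: "x \<in> {0..<d} \<Longrightarrow> at x within {0..} = at (x::real) within {0..<d}"
  by (rule at_within_nhd[of _ "{..<d}"]) auto

lemma at_within_Ico_nontrivial: "x \<in> {0..<d} \<Longrightarrow> at x within {0..<d} \<noteq> (bot :: real filter)"
  using islimpt_Ico[of 0 d x] by (auto simp: trivial_limit_within)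

lemma continuous_on_Ico_tendsto_at_right_0:
  fixes d :: real
  assumes "0 < d" "continuous_on {0..<d} g"
  shows "(g \<longlongrightarrow> g 0) (at_right 0)"
proof -
  have "(g \<longlongrightarrow> g 0) (at 0 within {0..<d})"
    using assms unfolding continuous_on_def by auto
  then show ?thesis by (simp add: at_0_within_Ico[OF assms(1)])
qed

lemma eventually_at_right_0_Ioo: "0 < d \<Longrightarrow> \<forall>\<^sub>F x in at_right 0. 0 < x \<and> x < (d::real)"
  unfolding eventually_at_right_field by blast

lemma eventually_at_right_0_initial_segment:
  "eventually P (at_right (0::real)) \<Longrightarrow> \<forall>\<^sub>F x in at_right 0. \<forall>t\<in>{0<..x}. P t"
  unfolding eventually_at_right_field by (metis greaterThanAtMost_iff order.strict_trans1)

lemma has_real_derivative_at_0_from_limit: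
  fixes h h' :: "real \<Rightarrow> real"
  assumes d: "0 < d" and h: "continuous_on {0..<d} h" and h': "continuous_on {0..<d} h'"
    and deriv: "\<And>x. 0 < x \<Longrightarrow> x < d \<Longrightarrow> (h has_real_derivative h' x) (at x)"
  shows "(h has_real_derivative h' 0) (at 0 within {0..<d})"
proof -
  have "((\<lambda>x. (h x - h 0) / x) \<longlongrightarrow> h' 0) (at_right 0)"
  proof (rule lhopital_right_0)
    show "((\<lambda>x. h x - h 0) \<longlongrightarrow> 0) (at_right 0)"
      using continuous_on_Ico_tendsto_at_right_0[OF d h] by (simp add: LIM_zero)
    show "\<forall>\<^sub>F x in at_right 0. ((\<lambda>x. h x - h 0) has_real_derivative h' x) (at x)"
      using eventually_at_right_0_Ioo[OF d] by eventually_elim (auto intro!: derivative_eq_intros deriv)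
    show "\<forall>\<^sub>F x in at_right 0. ((\<lambda>x. x) has_real_derivative 1) (at x)"
      by (auto intro!: derivative_eq_intros)
    show "((\<lambda>x. h' x / 1) \<longlongrightarrow> h' 0) (at_right 0)"
      using continuous_on_Ico_tendsto_at_right_0[OF d h'] by simp
  qed (auto intro: eventually_mono[OF eventually_at_right_less])
  then show ?thesis
    by (simp add: has_field_derivative_iff at_0_within_Ico[OF d])
qed

lemma MVT_abs_le:
  fixes E :: "real \<Rightarrow> real"
  assumes "a < b" "continuous_on {a..b} E"
    and "\<And>t. a < t \<Longrightarrow> t < b \<Longrightarrow> (E has_real_derivative E' t) (at t)"
    and "\<And>t. a < t \<Longrightarrow> t < b \<Longrightarrow> \<bar>E' t\<bar> \<le> B"
  shows "\<bar>E b - E a\<bar> \<le> B * (b - a)"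
proof -
  obtain l z where z: "a < z" "z < b" "DERIV E z :> l" "E b - E a = (b - a) * l"
    using MVT[OF assms(1,2)] assms(3) real_differentiable_def by blast
  have "l = E' z" using DERIV_unique[OF z(3) assms(3)[OF z(1,2)]] .
  then have "\<bar>E b - E a\<bar> = (b - a) * \<bar>E' z\<bar>" using z(4) assms(1) by (simp add: abs_mult)
  also have "\<dots> \<le> (b - a) * B" using assms(4)[OF z(1,2)] assms(1) by (intro mult_left_mono) auto
  finally show ?thesis by (simp add: mult.commute)
qed

lemma powr_lipschitz_above:
  fixes a x y q :: real
  assumes "0 < a" "a \<le> x" "a \<le> y" "0 \<le> q" "q \<le> 1"
  shows "\<bar>x powr q - y powr q\<bar> \<le> q * a powr (q - 1) * \<bar>x - y\<bar>"
proof -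
  have "norm ((\<lambda>t. t powr q) x - (\<lambda>t. t powr q) y) \<le> q * a powr (q - 1) * norm (x - y)"
  proof (rule field_differentiable_bound[of "{a..}"])
    fix z assume z: "z \<in> {a..}"
    then show "((\<lambda>t. t powr q) has_real_derivative q * z powr (q - 1)) (at z within {a..})"
      using assms(1) by (auto intro!: derivative_eq_intros)
    have "z powr (q - 1) \<le> a powr (q - 1)"
      using z assms by (intro powr_mono2') auto
    then show "norm (q * z powr (q - 1)) \<le> q * a powr (q - 1)"
      using assms(4) by (simp add: abs_mult mult_left_mono)
  qed (use assms in auto)
  then show ?thesis by simp
qed

lemma has_real_derivative_radial:
  fixes u :: "real \<Rightarrow> real"
  assumes "0 < t" "N \<ge> 1" "(u has_real_derivative u') (at t)"
  shows "((\<lambda>s. s ^ (N - 1) * u s) has_real_derivative t ^ (N - 1) * (u' + (real N - 1) / t * u t)) (at t)"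
proof -
  have "real (N - 1) * t ^ (N - 1 - 1) = t ^ (N - 1) * ((real N - 1) / t)"
  proof (cases "N = 1")
    case False
    then obtain M where "N = Suc (Suc M)" using assms(2) by (cases N; cases "N - 1") auto
    then show ?thesis using assms(1) by (simp add: field_simps)
  qed simp
  then show ?thesis
    using assms(3) by (auto intro!: derivative_eq_intros simp: algebra_simps)
qed

lemma integral_has_real_derivative_Ico:
  fixes g :: "real \<Rightarrow> real"
  assumes "continuous_on {0..<d} g" "x \<in> {0..<d}"
  shows "((\<lambda>x. integral {0..x} g) has_real_derivative g x) (at x within {0..<d})"
proof -
  define b where "b = (x + d) / 2"
  have "continuous_on {0..b} g"
    using assms by (auto simp: b_def intro: continuous_on_subset)
  then have "((\<lambda>x. integral {0..x} g) has_real_derivative g x) (at x within {0..b})"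
    by (rule integral_has_real_derivative) (use assms in \<open>auto simp: b_def\<close>)
  moreover have "at x within {0..b} = at x within {0..<d}"
    by (rule at_within_nhd[of _ "{..<b}"]) (use assms in \<open>auto simp: b_def\<close>)
  ultimately show ?thesis by simp
qed

text \<open>radial_average n R x = x^(-n) \<integral>_0^x s^(n-1) R(s) ds, extended continuously to x = 0.
  If (x^(N-1) u)' = x^(N-1) R and u(0) = 0, then u = x \<cdot> radial_average N R.\<close>

definition radial_average :: "nat \<Rightarrow> (real \<Rightarrow> real) \<Rightarrow> real \<Rightarrow> real" where
  "radial_average n R x =
     (if x = 0 then R 0 / real n else integral {0..x} (\<lambda>s. s ^ (n - 1) * R s) / x ^ n)"

lemma radial_average_tendsto_at_right_0:
  assumes n: "n \<ge> 1" and d: "0 < d" and R: "continuous_on {0..<d} R"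
  shows "(radial_average n R \<longlongrightarrow> R 0 / real n) (at_right 0)"
proof -
  define I where "I = (\<lambda>x. integral {0..x} (\<lambda>s. s ^ (n - 1) * R s))"
  have I': "(I has_real_derivative x ^ (n - 1) * R x) (at x within {0..<d})" if "x \<in> {0..<d}" for x
    unfolding I_def using R that by (intro integral_has_real_derivative_Ico continuous_intros)
  have "((\<lambda>x. I x / x ^ n) \<longlongrightarrow> R 0 / real n) (at_right 0)"
  proof (rule lhopital_right_0)
    have "continuous_on {0..<d} I" using I' by (intro DERIV_continuous_on) auto
    from continuous_on_Ico_tendsto_at_right_0[OF d this]
    show "(I \<longlongrightarrow> 0) (at_right 0)" by (simp add: I_def)
    show "((\<lambda>x. x ^ n) \<longlongrightarrow> 0) (at_right (0::real))"
      using n by (intro tendsto_eq_intros) auto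
    show "\<forall>\<^sub>F x in at_right 0. (I has_real_derivative x ^ (n - 1) * R x) (at x)"
      using eventually_at_right_0_Ioo[OF d]
    proof eventually_elim
      case (elim x)
      then have "at x within {0..<d} = at x"
        by (intro at_within_Ico_interior) auto
      with I'[of x] elim show ?case by simp
    qed
    show "\<forall>\<^sub>F x in at_right (0::real). x ^ n \<noteq> 0"
      using eventually_at_right_less[of "0::real"] by eventually_elim simp
    show "\<forall>\<^sub>F x in at_right (0::real). real n * x ^ (n - 1) \<noteq> 0"
      using eventually_at_right_less[of "0::real"] by eventually_elim (use n in simp)
    show "\<forall>\<^sub>F x in at_right (0::real). ((\<lambda>x. x ^ n) has_real_derivative real n * x ^ (n - 1)) (at x)"
      by (auto intro!: derivative_eq_intros)
    have "((\<lambda>x. R x / real n) \<longlongrightarrow> R 0 / real n) (at_right 0)"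
      using continuous_on_Ico_tendsto_at_right_0[OF d R] n by (intro tendsto_divide tendsto_const) simp_all
    moreover have "\<forall>\<^sub>F x in at_right 0. R x / real n = x ^ (n - 1) * R x / (real n * x ^ (n - 1))"
      using eventually_at_right_less[of "0::real"] by eventually_elim (use n in simp)
    ultimately show "((\<lambda>x. x ^ (n - 1) * R x / (real n * x ^ (n - 1))) \<longlongrightarrow> R 0 / real n) (at_right 0)"
      by (rule Lim_transform_eventually)
  qed
  moreover have "\<forall>\<^sub>F x in at_right 0. I x / x ^ n = radial_average n R x"
    using eventually_at_right_less[of "0::real"] by eventually_elim (simp add: radial_average_def I_def)
  ultimately show ?thesis by (rule Lim_transform_eventually)
qed

lemma radial_average_continuous_on:
  assumes n: "n \<ge> 1" and d: "0 < d" and R: "continuous_on {0..<d} R"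
  shows "continuous_on {0..<d} (radial_average n R)"
  unfolding continuous_on_eq_continuous_within
proof
  fix x assume x: "x \<in> {0..<d}"
  show "continuous (at x within {0..<d}) (radial_average n R)"
  proof (cases "x = 0")
    case True
    then show ?thesis
      using radial_average_tendsto_at_right_0[OF n d R]
      by (simp add: continuous_within at_0_within_Ico[OF d] radial_average_def)
  next
    case False
    define I where "I = (\<lambda>x. integral {0..x} (\<lambda>s. s ^ (n - 1) * R s))"
    have "continuous_on {0..<d} (\<lambda>s. s ^ (n - 1) * R s)"
      using R by (intro continuous_intros)
    then have "(I has_real_derivative x ^ (n - 1) * R x) (at x)"
      unfolding I_def using integral_has_real_derivative_Ico[of d _ x] x False
      by (simp add: at_within_Ico_interior)
    then have "isCont (\<lambda>x. I x / x ^ n) x"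
      using False by (intro continuous_intros DERIV_isCont) auto
    moreover have "\<forall>\<^sub>F y in nhds x. I y / y ^ n = radial_average n R y"
      using t1_space_nhds[OF False] by eventually_elim (simp add: radial_average_def I_def)
    ultimately show ?thesis
      by (simp add: isCont_cong continuous_at_imp_continuous_at_within)
  qed
qed

lemma integral_power_mult_by_parts:
  fixes R R' :: "real \<Rightarrow> real"
  assumes n: "n \<ge> 1" and x: "0 \<le> x" "x < d"
    and R: "\<And>s. s \<in> {0..<d} \<Longrightarrow> (R has_real_derivative R' s) (at s within {0..<d})"
    and R': "continuous_on {0..<d} R'"
  shows "integral {0..x} (\<lambda>s. s ^ n * R' s)
           = x ^ n * R x - real n * integral {0..x} (\<lambda>s. s ^ (n - 1) * R s)"
proof -
  define F where "F s = s ^ n * R s - real n * integral {0..s} (\<lambda>s. s ^ (n - 1) * R s)" for s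
  have "continuous_on {0..<d} R" using R by (intro DERIV_continuous_on) auto
  then have I': "((\<lambda>s. integral {0..s} (\<lambda>s. s ^ (n - 1) * R s)) has_real_derivative s ^ (n - 1) * R s)
      (at s within {0..<d})" if "s \<in> {0..<d}" for s
    using that by (intro integral_has_real_derivative_Ico continuous_intros)
  have "(F has_real_derivative s ^ n * R' s) (at s within {0..x})" if "s \<in> {0..x}" for s
  proof -
    have s: "s \<in> {0..<d}" using that x by auto
    have "(F has_real_derivative s ^ n * R' s) (at s within {0..<d})"
      unfolding F_def using R[OF s] I'[OF s] by (auto intro!: derivative_eq_intros simp: algebra_simps)
    then show ?thesis
      by (rule has_field_derivative_subset) (use x in auto)
  qed
  then have "((\<lambda>s. s ^ n * R' s) has_integral F x - F 0) {0..x}"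
    using x by (intro fundamental_theorem_of_calculus) (auto simp: has_real_derivative_iff_has_vector_derivative)
  moreover have "F 0 = 0" using n by (simp add: F_def)
  ultimately show ?thesis by (simp add: integral_unique F_def)
qed

lemma radial_average_has_real_derivative_pos:
  assumes n: "n \<ge> 1" and d: "0 < d"
    and R: "\<And>s. s \<in> {0..<d} \<Longrightarrow> (R has_real_derivative R' s) (at s within {0..<d})"
    and R': "continuous_on {0..<d} R'"
    and x: "0 < x" "x < d"
  shows "(radial_average n R has_real_derivative radial_average (Suc n) R' x) (at x)"
proof -
  define I where "I = (\<lambda>x. integral {0..x} (\<lambda>s. s ^ (n - 1) * R s))"
  have "continuous_on {0..<d} R" using R by (intro DERIV_continuous_on) auto
  then have "continuous_on {0..<d} (\<lambda>s. s ^ (n - 1) * R s)"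
    by (intro continuous_intros)
  then have "(I has_real_derivative x ^ (n - 1) * R x) (at x)"
    unfolding I_def using integral_has_real_derivative_Ico[of d _ x] x
    by (simp add: at_within_Ico_interior)
  then have "((\<lambda>y. I y / y ^ n) has_real_derivative
      (x ^ (n - 1) * R x * x ^ n - I x * (real n * x ^ (n - 1))) / (x ^ n * x ^ n)) (at x)"
    using x by (auto intro!: derivative_eq_intros)
  moreover have "(x ^ (n - 1) * R x * x ^ n - I x * (real n * x ^ (n - 1))) / (x ^ n * x ^ n)
      = radial_average (Suc n) R' x"
  proof -
    obtain k where k: "n = Suc k" using n by (cases n) auto
    have "(x ^ (n - 1) * R x * x ^ n - I x * (real n * x ^ (n - 1))) / (x ^ n * x ^ n)
        = (x ^ n * R x - real n * I x) / x ^ Suc n"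
      using x unfolding k by (simp add: divide_simps) (simp add: algebra_simps)
    also have "\<dots> = radial_average (Suc n) R' x"
      using integral_power_mult_by_parts[OF n _ x(2) R R'] x by (simp add: radial_average_def I_def)
    finally show ?thesis .
  qed
  moreover have "\<forall>\<^sub>F y in nhds x. y \<noteq> 0"
    using x by (intro t1_space_nhds) simp
  then have "\<forall>\<^sub>F y in nhds x. I y / y ^ n = radial_average n R y"
    by eventually_elim (simp add: radial_average_def I_def)
  ultimately show ?thesis
    by (simp add: DERIV_cong_ev)
qed

lemma radial_average_has_real_derivative:
  assumes n: "n \<ge> 1" and d: "0 < d"
    and R: "\<And>s. s \<in> {0..<d} \<Longrightarrow> (R has_real_derivative R' s) (at s within {0..<d})"
    and R': "continuous_on {0..<d} R'"
    and x: "x \<in> {0..<d}"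
  shows "(radial_average n R has_real_derivative radial_average (Suc n) R' x) (at x within {0..<d})"
proof (cases "x = 0")
  case True
  have "continuous_on {0..<d} R" using R by (intro DERIV_continuous_on) auto
  then show ?thesis
    unfolding True using radial_average_has_real_derivative_pos[OF n d R R']
    by (intro has_real_derivative_at_0_from_limit d radial_average_continuous_on R') (use n in auto)
next
  case False
  then show ?thesis
    using radial_average_has_real_derivative_pos[OF n d R R'] x
    by (auto intro: has_field_derivative_at_within)
qed

lemma radial_average_Ck_on:
  assumes "n \<ge> 1" "0 < d" "Ck_on k {0..<d} R"
  shows "Ck_on k {0..<d} (radial_average n R)"
  using assms
proof (induction k arbitrary: n R)
  case 0
  then show ?case using radial_average_continuous_on by simp
next
  case (Suc k)
  then obtain R' where R': "\<forall>s\<in>{0..<d}. (R has_real_derivative R' s) (at s within {0..<d})"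
    "Ck_on k {0..<d} R'" by auto
  have "\<forall>x\<in>{0..<d}. (radial_average n R has_real_derivative radial_average (Suc n) R' x)
      (at x within {0..<d})"
    using radial_average_has_real_derivative[OF Suc.prems(1,2)] R' Ck_on_imp_continuous_on by blast
  moreover have "Ck_on k {0..<d} (radial_average (Suc n) R')"
    using Suc.IH[of "Suc n" R'] R' Suc.prems by simp
  ultimately show ?case by auto
qed

definition deriv_within_nonneg :: "(real \<Rightarrow> real) \<Rightarrow> real \<Rightarrow> real" where
  "deriv_within_nonneg h x = vector_derivative h (at x within {0..})"

lemma taylor_coeff0_eq: "taylor_coeff0 g j = (deriv_within_nonneg ^^ j) g 0 / fact j"
  by (simp add: taylor_coeff0_def deriv_within_nonneg_def[abs_def])

lemma Ck_on_Suc_deriv_within_nonneg: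
  assumes "Ck_on (Suc k) {0..<d} h"
  shows "\<forall>x\<in>{0..<d}. (h has_real_derivative deriv_within_nonneg h x) (at x within {0..<d})"
    and "Ck_on k {0..<d} (deriv_within_nonneg h)"
proof -
  obtain h' where h': "\<forall>x\<in>{0..<d}. (h has_real_derivative h' x) (at x within {0..<d})"
    "Ck_on k {0..<d} h'"
    using assms by auto
  have eq: "deriv_within_nonneg h x = h' x" if x: "x \<in> {0..<d}" for x
    unfolding deriv_within_nonneg_def
  proof (rule vector_derivative_within)
    show "at x within {0..} \<noteq> bot"
      using at_within_Ico_nontrivial[OF x] at_within_atLeast_eq_Ico[OF x] by simp
    show "(h has_vector_derivative h' x) (at x within {0..})"
      using h'(1) x at_within_atLeast_eq_Ico[OF x]
      by (simp add: has_real_derivative_iff_has_vector_derivative)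
  qed
  show "\<forall>x\<in>{0..<d}. (h has_real_derivative deriv_within_nonneg h x) (at x within {0..<d})"
    using h'(1) eq by simp
  show "Ck_on k {0..<d} (deriv_within_nonneg h)"
    using Ck_on_cong[OF h'(2)] eq by simp
qed

lemma Ck_on_funpow_deriv_within_nonneg:
  assumes "Ck_on K {0..<d} h" "j \<le> K"
  shows "Ck_on (K - j) {0..<d} ((deriv_within_nonneg ^^ j) h)"
  using assms(2)
proof (induction j)
  case 0
  then show ?case using assms(1) by simp
next
  case (Suc j)
  then have "Ck_on (Suc (K - Suc j)) {0..<d} ((deriv_within_nonneg ^^ j) h)"
    by (simp add: Suc_diff_Suc)
  then show ?case using Ck_on_Suc_deriv_within_nonneg(2) by simp
qed

lemma Ck_on_funpow_deriv_within_nonneg_has_derivative: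
  assumes "Ck_on K {0..<d} h" "j < K" "x \<in> {0..<d}"
  shows "((deriv_within_nonneg ^^ j) h has_real_derivative (deriv_within_nonneg ^^ Suc j) h x)
           (at x within {0..<d})"
proof -
  have "Ck_on (Suc (K - Suc j)) {0..<d} ((deriv_within_nonneg ^^ j) h)"
    using Ck_on_funpow_deriv_within_nonneg[OF assms(1), of j] assms(2) by (simp add: Suc_diff_Suc)
  then show ?thesis using Ck_on_Suc_deriv_within_nonneg(1) assms(3) by simp
qed

lemma Ck_on_taylor_remainder_le:
  fixes h :: "real \<Rightarrow> real"
  assumes h: "Ck_on (Suc K) {0..<d} h" and x: "0 < x" "x < d"
    and C: "\<And>s. s \<in> {0..x} \<Longrightarrow> \<bar>(deriv_within_nonneg ^^ Suc K) h s\<bar> \<le> C"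
  shows "\<bar>h x - (\<Sum>j\<le>K. (deriv_within_nonneg ^^ j) h 0 / fact j * x ^ j)\<bar> \<le> C / fact K * x ^ Suc K"
proof -
  define Dh where "Dh j = (deriv_within_nonneg ^^ j) h" for j
  define i where "i = (\<lambda>s. ((x - s) ^ K / fact K) * Dh (Suc K) s)"
  have derivs: "(Dh m has_vector_derivative Dh (Suc m) t) (at t within {0..x})"
    if "m < Suc K" "0 \<le> t" "t \<le> x" for m t
  proof -
    have "(Dh m has_real_derivative Dh (Suc m) t) (at t within {0..<d})"
      unfolding Dh_def using that x by (intro Ck_on_funpow_deriv_within_nonneg_has_derivative[OF h]) auto
    then have "(Dh m has_real_derivative Dh (Suc m) t) (at t within {0..x})"
      by (rule has_field_derivative_subset) (use x in auto)
    then show ?thesis by (simp add: has_real_derivative_iff_has_vector_derivative)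
  qed
  have i_eq: "(\<lambda>s. ((x - s) ^ (Suc K - 1) / fact (Suc K - 1)) *\<^sub>R Dh (Suc K) s) = i"
    by (simp add: i_def)
  have "h x = (\<Sum>j<Suc K. ((x - 0) ^ j / fact j) *\<^sub>R Dh j 0) + integral {0..x} i"
    unfolding i_eq[symmetric] by (rule Taylor_integral) (use x derivs in \<open>auto simp: Dh_def\<close>)
  moreover have "(\<Sum>j<Suc K. ((x - 0) ^ j / fact j) *\<^sub>R Dh j 0) = (\<Sum>j\<le>K. Dh j 0 / fact j * x ^ j)"
    by (simp add: lessThan_Suc_atMost mult.commute)
  moreover have "\<bar>integral {0..x} i\<bar> \<le> C / fact K * x ^ Suc K"
  proof -
    have "i integrable_on {0..x}"
      unfolding i_eq[symmetric] by (rule Taylor_integrable) (use x derivs in \<open>auto simp: Dh_def\<close>)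
    then have hasint: "(i has_integral integral {0..x} i) {0..x}"
      by (rule integrable_integral)
    have bound: "norm (i s) \<le> x ^ K / fact K * C" if "s \<in> {0..x} - {}" for s
    proof -
      have "\<bar>i s\<bar> = (x - s) ^ K / fact K * \<bar>Dh (Suc K) s\<bar>"
        using that by (simp add: i_def abs_mult)
      also have "\<dots> \<le> x ^ K / fact K * C"
        using that x C[of s] by (intro mult_mono divide_right_mono power_mono) (auto simp: Dh_def)
      finally show ?thesis by simp
    qed
    have "0 \<le> C" using C[of 0] x by force
    then have "norm (integral {0..x} i) \<le> x ^ K / fact K * C * (x - 0)"
      using has_integral_bound_real[OF _ finite.emptyI hasint bound] x by simp
    then show ?thesis by (simp add: algebra_simps)
  qed
  ultimately show ?thesis by (simp add: Dh_def)
qed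

lemma Ck_on_taylor_bigo:
  fixes h :: "real \<Rightarrow> real"
  assumes d: "0 < d" and h: "Ck_on (Suc K) {0..<d} h"
  shows "(\<lambda>x. h x - (\<Sum>j\<le>K. (deriv_within_nonneg ^^ j) h 0 / fact j * x ^ j))
           \<in> O[at_right 0](\<lambda>x. x ^ Suc K)"
proof -
  have "continuous_on {0..<d} ((deriv_within_nonneg ^^ Suc K) h)"
    using Ck_on_funpow_deriv_within_nonneg[OF h, of "Suc K"] by simp
  then have "continuous_on {0..d / 2} ((deriv_within_nonneg ^^ Suc K) h)"
    by (rule continuous_on_subset) (use d in auto)
  then obtain C where C: "\<And>s. s \<in> {0..d / 2} \<Longrightarrow> \<bar>(deriv_within_nonneg ^^ Suc K) h s\<bar> \<le> C"
    using compact_imp_bounded[OF compact_continuous_image[OF _ compact_Icc]]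
    by (force simp: bounded_real)
  have "\<forall>\<^sub>F x in at_right 0. 0 < x \<and> x < d / 2"
    using d by (intro eventually_at_right_0_Ioo) simp
  then have "\<forall>\<^sub>F x in at_right 0. norm (h x - (\<Sum>j\<le>K. (deriv_within_nonneg ^^ j) h 0 / fact j * x ^ j))
      \<le> C / fact K * norm (x ^ Suc K)"
  proof eventually_elim
    case (elim x)
    then show ?case
      using Ck_on_taylor_remainder_le[OF h, of x C] C by simp
  qed
  then show ?thesis by (rule bigoI)
qed

lemma is_profile_on_Ico:
  assumes sol: "is_profile N m \<sigma> p c A f xm" and d: "0 < d" "d \<le> xm"
  obtains f1 u1 u2 where
    "f 0 = A" "\<forall>x\<in>{0..<d}. 0 < f x"
    "\<forall>x\<in>{0..<d}. (f has_real_derivative f1 x) (at x within {0..<d})"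
    "\<forall>x\<in>{0..<d}. ((\<lambda>x. f x powr m) has_real_derivative u1 x) (at x within {0..<d})"
    "\<forall>x\<in>{0..<d}. (u1 has_real_derivative u2 x) (at x within {0..<d})"
    "continuous_on {0..<d} u2" "u1 0 = 0"
    "\<forall>x. 0 < x \<and> x < d \<longrightarrow> u2 x + (real N - 1) / x * u1 x + alpha m \<sigma> p * f x
        + beta m \<sigma> p * x * f1 x - c * x powr \<sigma> * f x powr p = 0"
proof -
  obtain f1 u1 u2 where h: "f 0 = A" "\<forall>x\<in>{0..<xm}. 0 < f x" "f1 0 = 0"
    "\<forall>x\<in>{0..<xm}. (f has_real_derivative f1 x) (at x within {0..<xm})"
    "\<forall>x\<in>{0..<xm}. ((\<lambda>x. f x powr m) has_real_derivative u1 x) (at x within {0..<xm})"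
    "\<forall>x\<in>{0..<xm}. (u1 has_real_derivative u2 x) (at x within {0..<xm})"
    "continuous_on {0..<xm} u2"
    "\<forall>x\<in>{0<..<xm}. u2 x + (real N - 1) / x * u1 x + alpha m \<sigma> p * f x
        + beta m \<sigma> p * x * f1 x - c * x powr \<sigma> * f x powr p = 0"
    using sol unfolding is_profile_def by blast
  have sub: "{0..<d} \<subseteq> {0..<xm}" using d by auto
  have u1_0: "u1 0 = 0"
  proof -
    have "((\<lambda>x. f x powr m) has_real_derivative m * f 0 powr (m - 1) * f1 0) (at 0 within {0..<xm})"
      using h(2,4) d by (auto intro!: derivative_eq_intros)
    moreover have "((\<lambda>x. f x powr m) has_real_derivative u1 0) (at 0 within {0..<xm})"
      using h(5) d by auto
    ultimately have "m * f 0 powr (m - 1) * f1 0 = u1 0"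
      using at_within_Ico_nontrivial[of 0 xm] d by (auto intro: has_field_derivative_unique)
    then show ?thesis using h(3) by simp
  qed
  show ?thesis
  proof (rule that[OF h(1)])
    show "\<forall>x\<in>{0..<d}. 0 < f x" using h(2) sub by blast
    show "\<forall>x\<in>{0..<d}. (f has_real_derivative f1 x) (at x within {0..<d})"
      using h(4) sub by (meson has_field_derivative_subset subsetD)
    show "\<forall>x\<in>{0..<d}. ((\<lambda>x. f x powr m) has_real_derivative u1 x) (at x within {0..<d})"
      using h(5) sub by (meson has_field_derivative_subset subsetD)
    show "\<forall>x\<in>{0..<d}. (u1 has_real_derivative u2 x) (at x within {0..<d})"
      using h(6) sub by (meson has_field_derivative_subset subsetD)
    show "continuous_on {0..<d} u2" using h(7) sub by (rule continuous_on_subset)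
  qed (use u1_0 h(8) d in auto)
qed

lemma radial_ode_second_derivative_eq:
  fixes g g' R :: "real \<Rightarrow> real"
  assumes N: "N \<ge> 1" and d: "0 < d"
    and g: "\<And>x. x \<in> {0..<d} \<Longrightarrow> (g has_real_derivative g' x) (at x within {0..<d})"
    and g_0: "g 0 = 0"
    and g': "continuous_on {0..<d} g'" and R: "continuous_on {0..<d} R"
    and ode: "\<And>x. 0 < x \<Longrightarrow> x < d \<Longrightarrow> g' x + (real N - 1) / x * g x = R x"
    and x: "x \<in> {0..<d}"
  shows "g' x = R x - (real N - 1) * radial_average N R x"
proof -
  define I where "I = (\<lambda>y. integral {0..y} (\<lambda>s. s ^ (N - 1) * R s))"
  have I': "(I has_real_derivative y ^ (N - 1) * R y) (at y within {0..<d})" if "y \<in> {0..<d}" for y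
    unfolding I_def using R that by (intro integral_has_real_derivative_Ico continuous_intros)
  have g_eq: "g y = y * radial_average N R y" if y: "0 < y" "y < d" for y
  proof -
    define P where "P = (\<lambda>y. y ^ (N - 1) * g y - I y)"
    have "continuous_on {0..<d} g" "continuous_on {0..<d} I"
      by (rule DERIV_continuous_on[OF g], assumption) (rule DERIV_continuous_on[OF I'], assumption)
    then have "continuous_on {0..y} P"
      unfolding P_def using y by (auto intro!: continuous_intros intro: continuous_on_subset)
    moreover have "(P has_real_derivative 0) (at t)" if t: "0 < t" "t < y" for t
    proof -
      have td: "at t within {0..<d} = at t" using t y by (intro at_within_Ico_interior) auto
      have "((\<lambda>y. y ^ (N - 1) * g y) has_real_derivative t ^ (N - 1) * (g' t + (real N - 1) / t * g t)) (at t)"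
        using t y g[of t] td by (intro has_real_derivative_radial N) auto
      moreover have "(I has_real_derivative t ^ (N - 1) * R t) (at t)"
        using I'[of t] t y td by auto
      ultimately have "(P has_real_derivative
          t ^ (N - 1) * (g' t + (real N - 1) / t * g t) - t ^ (N - 1) * R t) (at t)"
        unfolding P_def by (rule DERIV_diff)
      then show ?thesis using ode[of t] t y by simp
    qed
    ultimately have "P y = P 0" by (intro DERIV_isconst_end[OF y(1)])
    also have "P 0 = 0" using g_0 by (cases N) (auto simp: P_def I_def)
    finally have "y ^ (N - 1) * g y = I y" by (simp add: P_def)
    moreover have "y ^ N = y ^ (N - 1) * y" using N by (cases N) auto
    ultimately show ?thesis using y by (simp add: radial_average_def I_def field_simps)
  qed
  have eq_pos: "g' y = R y - (real N - 1) * radial_average N R y" if "0 < y" "y < d" for y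
    using ode[OF that] g_eq[OF that] that by simp
  show ?thesis
  proof (cases "x = 0")
    case True
    have "((\<lambda>y. R y - (real N - 1) * radial_average N R y) \<longlongrightarrow>
        R 0 - (real N - 1) * radial_average N R 0) (at_right 0)"
      using continuous_on_Ico_tendsto_at_right_0[OF d] R radial_average_continuous_on[OF N d R]
      by (intro tendsto_intros) auto
    moreover have "\<forall>\<^sub>F y in at_right 0. R y - (real N - 1) * radial_average N R y = g' y"
      using eventually_at_right_0_Ioo[OF d] by eventually_elim (simp add: eq_pos)
    ultimately have "(g' \<longlongrightarrow> R 0 - (real N - 1) * radial_average N R 0) (at_right 0)"
      by (rule Lim_transform_eventually)
    then show ?thesis
      using continuous_on_Ico_tendsto_at_right_0[OF d g'] True by (auto dest: tendsto_unique[rotated 1])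
  next
    case False
    then show ?thesis using x eq_pos by simp
  qed
qed

lemma is_profile_powr_Ck_on:
  assumes N: "N \<ge> 1" and m: "m \<noteq> 0" and sol: "is_profile N m \<sigma> p 0 A \<phi> \<delta>"
  shows "Ck_on k {0..<\<delta>} (\<lambda>x. \<phi> x powr m)"
proof -
  define S where "S = {0..<\<delta>}"
  define w where "w = (\<lambda>x. \<phi> x powr m)"
  have \<delta>: "0 < \<delta>" using sol by (simp add: is_profile_def)
  obtain f1 u1 u2 where
    "\<phi> 0 = A" and pos: "\<forall>x\<in>S. 0 < \<phi> x" and
    \<phi>': "\<forall>x\<in>S. (\<phi> has_real_derivative f1 x) (at x within S)" and
    w': "\<forall>x\<in>S. (w has_real_derivative u1 x) (at x within S)" and
    u1': "\<forall>x\<in>S. (u1 has_real_derivative u2 x) (at x within S)" and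
    u2: "continuous_on S u2" and u1_0: "u1 0 = 0" and
    ode: "\<forall>x. 0 < x \<and> x < \<delta> \<longrightarrow> u2 x + (real N - 1) / x * u1 x + alpha m \<sigma> p * \<phi> x
            + beta m \<sigma> p * x * f1 x - 0 * x powr \<sigma> * \<phi> x powr p = 0"
    unfolding S_def w_def by (rule is_profile_on_Ico[OF sol \<delta> order.refl])
  have w_pos: "0 < w x" if "x \<in> S" for x
    using bspec[OF pos that] by (simp add: w_def)
  have \<phi>_eq: "\<phi> x = w x powr (1 / m)" if "x \<in> S" for x
    using bspec[OF pos that] m by (simp add: w_def powr_powr)
  have f1_eq: "f1 x = 1 / m * w x powr (1 / m - 1) * u1 x" if x: "x \<in> S" for x
  proof -
    have "((\<lambda>x. w x powr (1 / m)) has_real_derivative 1 / m * w x powr (1 / m - 1) * u1 x)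
        (at x within S)"
      using w' w_pos x by (auto intro!: derivative_eq_intros)
    then have "(\<phi> has_real_derivative 1 / m * w x powr (1 / m - 1) * u1 x) (at x within S)"
      by (rule has_field_derivative_transform_within[OF _ zero_less_one x]) (simp add: \<phi>_eq)
    moreover have "at x within S \<noteq> bot"
      using at_within_Ico_nontrivial x by (simp add: S_def)
    ultimately show ?thesis
      using \<phi>' x by (metis has_field_derivative_unique)
  qed
  define R where "R x = - alpha m \<sigma> p * w x powr (1 / m)
      - beta m \<sigma> p * x * (1 / m * w x powr (1 / m - 1) * u1 x)" for x
  have w_cont: "continuous_on S w" and u1_cont: "continuous_on S u1"
    using w' u1' by (auto intro: DERIV_continuous_on)
  have R_cont: "continuous_on S R"
    unfolding R_def using w_cont u1_cont w_pos m
    by (auto intro!: continuous_intros simp: less_imp_neq[symmetric])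
  have u2_eq: "u2 x = R x - (real N - 1) * radial_average N R x" if "x \<in> S" for x
  proof (rule radial_ode_second_derivative_eq[where g = u1 and g' = u2])
    show "u2 x + (real N - 1) / x * u1 x = R x" if "0 < x" "x < \<delta>" for x
    proof -
      have "x \<in> S" using that by (simp add: S_def)
      then show ?thesis
        using ode[rule_format, of x] that unfolding f1_eq[OF \<open>x \<in> S\<close>] \<phi>_eq[OF \<open>x \<in> S\<close>] R_def
        by (simp add: algebra_simps)
    qed
  qed (use N \<delta> u1' u1_0 u2 R_cont that in \<open>auto simp: S_def\<close>)
  have u1_smooth: "Ck_on (Suc j) S u1" for j
  proof (induction j)
    case 0
    then show ?case using u1' u2 by auto
  next
    case (Suc j)
    have "Ck_on (Suc j) S w"
      using w' Ck_on_SucD[OF Suc.IH] by auto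
    then have "Ck_on (Suc j) S R"
      unfolding R_def using w_pos Suc
      by (intro Ck_on_diff Ck_on_cmult Ck_on_mult Ck_on_ident Ck_on_powr)
    then have "Ck_on (Suc j) S (\<lambda>x. R x - (real N - 1) * radial_average N R x)"
      using radial_average_Ck_on[OF N \<delta>, of "Suc j" R] unfolding S_def
      by (intro Ck_on_diff Ck_on_cmult)
    then have "Ck_on (Suc j) S u2"
      by (rule Ck_on_cong) (simp add: u2_eq)
    then show ?case using u1' by auto
  qed
  have "Ck_on (Suc k) S w" using w' Ck_on_SucD[OF u1_smooth[of k]] by auto
  then show ?thesis unfolding S_def w_def by (rule Ck_on_SucD)
qed

lemma profile_flux_has_real_derivative:
  fixes f f1 u1 u2 :: "real \<Rightarrow> real"
  assumes t: "0 < t" and N: "N \<ge> 1"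
    and f: "(f has_real_derivative f1 t) (at t)" and u1: "(u1 has_real_derivative u2 t) (at t)"
    and ode: "u2 t + (real N - 1) / t * u1 t + \<alpha> * f t + \<beta> * t * f1 t - c * t powr \<sigma> * f t powr p = 0"
  shows "((\<lambda>s. s ^ (N - 1) * u1 s + \<beta> * s ^ N * f s) has_real_derivative
           t ^ (N - 1) * (c * t powr \<sigma> * f t powr p + (\<beta> * real N - \<alpha>) * f t)) (at t)"
proof -
  have "((\<lambda>s. \<beta> * s ^ N * f s) has_real_derivative \<beta> * (real N * t ^ (N - 1) * f t + t ^ N * f1 t)) (at t)"
    using f by (auto intro!: derivative_eq_intros simp: algebra_simps)
  with has_real_derivative_radial[OF t N u1]
  have "((\<lambda>s. s ^ (N - 1) * u1 s + \<beta> * s ^ N * f s) has_real_derivative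
      t ^ (N - 1) * (u2 t + (real N - 1) / t * u1 t) + \<beta> * (real N * t ^ (N - 1) * f t + t ^ N * f1 t)) (at t)"
    by (rule DERIV_add)
  moreover have "t ^ (N - 1) * (u2 t + (real N - 1) / t * u1 t)
      + \<beta> * (real N * t ^ (N - 1) * f t + t ^ N * f1 t)
      = t ^ (N - 1) * (c * t powr \<sigma> * f t powr p + (\<beta> * real N - \<alpha>) * f t)"
  proof -
    have tN: "t ^ N = t ^ (N - 1) * t" using N by (cases N) auto
    have eq: "u2 t + (real N - 1) / t * u1 t = c * t powr \<sigma> * f t powr p - \<alpha> * f t - \<beta> * t * f1 t"
      using ode by linarith
    show ?thesis unfolding tN eq by (simp add: algebra_simps)
  qed
  ultimately show ?thesis by simp
qed

lemma abs_le_by_absorption: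
  fixes D :: "real \<Rightarrow> real"
  assumes x: "0 \<le> x" and D: "continuous_on {0..x} D" and c: "c \<le> 1 / 2"
    and bound: "\<And>M t. (\<And>s. s \<in> {0..x} \<Longrightarrow> \<bar>D s\<bar> \<le> M) \<Longrightarrow> t \<in> {0..x} \<Longrightarrow> \<bar>D t\<bar> \<le> X + c * M"
  shows "\<bar>D x\<bar> \<le> 2 * X"
proof -
  have "continuous_on {0..x} (\<lambda>s. \<bar>D s\<bar>)" using D by (intro continuous_intros)
  moreover have "{0..x} \<noteq> {}" using x by simp
  ultimately obtain ts where ts: "ts \<in> {0..x}" "\<forall>s\<in>{0..x}. \<bar>D s\<bar> \<le> \<bar>D ts\<bar>"
    using continuous_attains_sup[OF compact_Icc] by blast
  have "\<bar>D ts\<bar> \<le> X + c * \<bar>D ts\<bar>" using bound ts by blast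
  moreover have "c * \<bar>D ts\<bar> \<le> 1 / 2 * \<bar>D ts\<bar>" using c by (intro mult_right_mono) auto
  ultimately have "\<bar>D ts\<bar> \<le> 2 * X" by linarith
  moreover have "\<bar>D x\<bar> \<le> \<bar>D ts\<bar>" using ts(2) x by simp
  ultimately show ?thesis by linarith
qed

lemma radial_second_order_bound:
  fixes D D' E E' :: "real \<Rightarrow> real"
  assumes x: "0 < x" and N: "N \<ge> 1" and B: "0 \<le> B" "0 \<le> B'"
    and D: "continuous_on {0..x} D" "D 0 = 0"
      "\<And>t. 0 < t \<Longrightarrow> t < x \<Longrightarrow> (D has_real_derivative D' t) (at t)"
    and E: "continuous_on {0..x} E" "E 0 = 0"
      "\<And>t. 0 < t \<Longrightarrow> t < x \<Longrightarrow> (E has_real_derivative E' t) (at t)"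
    and E'_le: "\<And>t. 0 < t \<Longrightarrow> t < x \<Longrightarrow> \<bar>E' t\<bar> \<le> t ^ (N - 1) * B"
    and E_D'_le: "\<And>t. 0 < t \<Longrightarrow> t < x \<Longrightarrow> \<bar>E t - t ^ (N - 1) * D' t\<bar> \<le> t ^ N * B'"
  shows "\<bar>D x\<bar> \<le> (B + B') * x\<^sup>2"
proof -
  have E_le: "\<bar>E s\<bar> \<le> s ^ N * B" if s: "0 < s" "s < x" for s
  proof -
    have "\<bar>E s - E 0\<bar> \<le> s ^ (N - 1) * B * (s - 0)"
    proof (rule MVT_abs_le[OF s(1)])
      show "continuous_on {0..s} E" by (rule continuous_on_subset[OF E(1)]) (use s in auto)
      show "\<bar>E' t\<bar> \<le> s ^ (N - 1) * B" if "0 < t" "t < s" for t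
        using E'_le[of t] that s B by (meson less_imp_le less_trans mult_right_mono order_trans power_mono)
    qed (use E(3) s in auto)
    moreover have "s ^ (N - 1) * s = s ^ N" using N by (cases N) auto
    ultimately show ?thesis using E(2) by (simp add: algebra_simps)
  qed
  have D'_le: "\<bar>D' s\<bar> \<le> x * (B + B')" if s: "0 < s" "s < x" for s
  proof -
    have "s ^ (N - 1) * \<bar>D' s\<bar> \<le> \<bar>E s\<bar> + \<bar>E s - s ^ (N - 1) * D' s\<bar>"
      using s by (simp add: abs_mult flip: abs_minus_commute)
    also have "\<dots> \<le> s ^ N * (B + B')"
      using E_le[OF s] E_D'_le[OF s] by (simp add: algebra_simps)
    also have "\<dots> = s ^ (N - 1) * (s * (B + B'))" using N by (cases N) auto
    finally have "\<bar>D' s\<bar> \<le> s * (B + B')" using s by simp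
    also have "\<dots> \<le> x * (B + B')" using s B by (intro mult_right_mono) auto
    finally show ?thesis .
  qed
  have "\<bar>D x - D 0\<bar> \<le> x * (B + B') * (x - 0)"
    by (rule MVT_abs_le[OF x D(1) D(3) D'_le])
  then show ?thesis using D(2) by (simp add: power2_eq_square algebra_simps)
qed

text \<open>Two profiles f, \<phi> near 0: D = f^m - \<phi>^m with derivative D', Dl = f - \<phi>, E the
  difference of the fluxes t^(N-1) (f^m)' + \<beta> t^N f, fp = f^p, and c0 = \<beta> N - \<alpha>.\<close>

locale profile_difference =
  fixes N :: nat and \<sigma> \<beta> c0 L a0 d :: real and D D' Dl E fp :: "real \<Rightarrow> real"
  assumes N: "N \<ge> 1" and \<sigma>: "0 < \<sigma>" and d: "0 < d" and L: "0 \<le> L"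
    and D_cont: "continuous_on {0..<d} D" and D_0: "D 0 = 0"
    and D_deriv: "\<And>t. 0 < t \<Longrightarrow> t < d \<Longrightarrow> (D has_real_derivative D' t) (at t)"
    and E_cont: "continuous_on {0..<d} E" and E_0: "E 0 = 0"
    and E_deriv: "\<And>t. 0 < t \<Longrightarrow> t < d \<Longrightarrow>
      (E has_real_derivative t ^ (N - 1) * (t powr \<sigma> * fp t + c0 * Dl t)) (at t)"
    and E_eq: "\<And>t. 0 < t \<Longrightarrow> t < d \<Longrightarrow> E t = t ^ (N - 1) * D' t + \<beta> * t ^ N * Dl t"
    and Dl_le: "\<forall>\<^sub>F t in at_right 0. \<bar>Dl t\<bar> \<le> L * \<bar>D t\<bar>"
    and fp_tendsto: "(fp \<longlongrightarrow> a0) (at_right 0)"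
begin

lemma D_minus_power_le:
  assumes x: "0 < x" "x < d" and F: "0 \<le> F" and G: "0 \<le> G"
    and fp_le: "\<And>t. 0 < t \<Longrightarrow> t < x \<Longrightarrow> \<bar>fp t - a\<bar> \<le> F"
    and Dl_le: "\<And>t. 0 < t \<Longrightarrow> t < x \<Longrightarrow> \<bar>Dl t\<bar> \<le> G"
  shows "\<bar>D x - a / ((\<sigma> + 2) * (\<sigma> + real N)) * x powr (\<sigma> + 2)\<bar>
           \<le> (x powr \<sigma> * F + (\<bar>c0\<bar> + \<bar>\<beta>\<bar>) * G) * x\<^sup>2"
proof -
  \<comment> \<open>c t^(\<sigma>+2) solves the model problem fp = a, Dl = 0; subtract it from D and its flux from E.\<close>
  define c where "c = a / ((\<sigma> + 2) * (\<sigma> + real N))"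
  have \<sigma>N: "0 < \<sigma> + real N" using \<sigma> by simp
  have pow: "t powr (\<sigma> + real k) = t powr \<sigma> * t ^ k" if "0 < t" for t :: real and k
    using that by (simp add: powr_add powr_realpow)
  have "\<bar>D x - c * x powr (\<sigma> + 2)\<bar> \<le> ((x powr \<sigma> * F + \<bar>c0\<bar> * G) + \<bar>\<beta>\<bar> * G) * x\<^sup>2"
  proof (rule radial_second_order_bound[OF x(1) N, where
        D = "\<lambda>t. D t - c * t powr (\<sigma> + 2)" and D' = "\<lambda>t. D' t - c * ((\<sigma> + 2) * t powr (\<sigma> + 1))"
        and E = "\<lambda>t. E t - a / (\<sigma> + real N) * t powr (\<sigma> + real N)"
        and E' = "\<lambda>t. t ^ (N - 1) * (t powr \<sigma> * (fp t - a) + c0 * Dl t)"])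
    have "{0..x} \<subseteq> {0..<d}" using x by auto
    then have "continuous_on {0..x} D" "continuous_on {0..x} E"
      using continuous_on_subset D_cont E_cont by blast+
    then show "continuous_on {0..x} (\<lambda>t. D t - c * t powr (\<sigma> + 2))"
      and "continuous_on {0..x} (\<lambda>t. E t - a / (\<sigma> + real N) * t powr (\<sigma> + real N))"
      using \<sigma> \<sigma>N by (auto intro!: continuous_intros continuous_on_powr')
    show "((\<lambda>t. D t - c * t powr (\<sigma> + 2)) has_real_derivative
        D' t - c * ((\<sigma> + 2) * t powr (\<sigma> + 1))) (at t)" if "0 < t" "t < x" for t
      using D_deriv[of t] that x by (auto intro!: derivative_eq_intros simp: add.commute)
    show "((\<lambda>t. E t - a / (\<sigma> + real N) * t powr (\<sigma> + real N)) has_real_derivative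
        t ^ (N - 1) * (t powr \<sigma> * (fp t - a) + c0 * Dl t)) (at t)" if t: "0 < t" "t < x" for t
    proof -
      have deriv: "((\<lambda>t. E t - a / (\<sigma> + real N) * t powr (\<sigma> + real N)) has_real_derivative
          t ^ (N - 1) * (t powr \<sigma> * fp t + c0 * Dl t)
          - a / (\<sigma> + real N) * ((\<sigma> + real N) * t powr (\<sigma> + real N - 1))) (at t)"
        using E_deriv[of t] t x by (intro DERIV_diff DERIV_cmult has_real_derivative_powr) auto
      have "t powr (\<sigma> + real N - 1) = t powr \<sigma> * t ^ (N - 1)"
        using pow[OF t(1), of "N - 1"] N by (simp add: of_nat_diff algebra_simps)
      then have "a / (\<sigma> + real N) * ((\<sigma> + real N) * t powr (\<sigma> + real N - 1))
          = a * (t powr \<sigma> * t ^ (N - 1))"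
        using \<sigma>N by simp
      then have "t ^ (N - 1) * (t powr \<sigma> * fp t + c0 * Dl t)
          - a / (\<sigma> + real N) * ((\<sigma> + real N) * t powr (\<sigma> + real N - 1))
          = t ^ (N - 1) * (t powr \<sigma> * (fp t - a) + c0 * Dl t)"
        by (simp add: algebra_simps)
      with deriv show ?thesis by simp
    qed
    show "\<bar>t ^ (N - 1) * (t powr \<sigma> * (fp t - a) + c0 * Dl t)\<bar>
        \<le> t ^ (N - 1) * (x powr \<sigma> * F + \<bar>c0\<bar> * G)" if t: "0 < t" "t < x" for t
    proof -
      have "\<bar>t powr \<sigma> * (fp t - a)\<bar> \<le> x powr \<sigma> * F"
        using fp_le[OF t] t \<sigma> F by (auto simp: abs_mult intro!: mult_mono powr_mono2)
      moreover have "\<bar>c0 * Dl t\<bar> \<le> \<bar>c0\<bar> * G"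
        using Dl_le[OF t] by (simp add: abs_mult mult_left_mono)
      ultimately have "\<bar>t powr \<sigma> * (fp t - a) + c0 * Dl t\<bar> \<le> x powr \<sigma> * F + \<bar>c0\<bar> * G"
        by linarith
      then show ?thesis using t by (simp add: abs_mult mult_left_mono)
    qed
    show "\<bar>E t - a / (\<sigma> + real N) * t powr (\<sigma> + real N)
        - t ^ (N - 1) * (D' t - c * ((\<sigma> + 2) * t powr (\<sigma> + 1)))\<bar> \<le> t ^ N * (\<bar>\<beta>\<bar> * G)"
      if t: "0 < t" "t < x" for t
    proof -
      have "t ^ (N - 1) * (c * ((\<sigma> + 2) * t powr (\<sigma> + 1))) = a / (\<sigma> + real N) * t powr (\<sigma> + real N)"
      proof -
        have "c * (\<sigma> + 2) = a / (\<sigma> + real N)" using \<sigma> by (simp add: c_def)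
        moreover have "t ^ (N - 1) * t powr (\<sigma> + 1) = t powr (\<sigma> + real N)"
          using pow[OF t(1), of N] pow[OF t(1), of 1] N by (cases N) (auto simp: algebra_simps)
        moreover have "t ^ (N - 1) * (c * ((\<sigma> + 2) * t powr (\<sigma> + 1)))
            = (c * (\<sigma> + 2)) * (t ^ (N - 1) * t powr (\<sigma> + 1))"
          by (simp only: ac_simps)
        ultimately show ?thesis by simp
      qed
      then have "E t - a / (\<sigma> + real N) * t powr (\<sigma> + real N)
          - t ^ (N - 1) * (D' t - c * ((\<sigma> + 2) * t powr (\<sigma> + 1))) = \<beta> * t ^ N * Dl t"
        using E_eq[of t] t x by (simp add: algebra_simps)
      moreover have "\<bar>\<beta> * t ^ N * Dl t\<bar> = t ^ N * (\<bar>\<beta>\<bar> * \<bar>Dl t\<bar>)"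
        using t by (simp add: abs_mult)
      moreover have "\<dots> \<le> t ^ N * (\<bar>\<beta>\<bar> * G)"
        using Dl_le[OF t] t by (intro mult_left_mono) auto
      ultimately show ?thesis by simp
    qed
  qed (use D_0 E_0 x F G \<sigma> \<sigma>N in auto)
  then show ?thesis by (simp add: c_def algebra_simps)
qed

lemma D_bigo: "D \<in> O[at_right 0](\<lambda>x. x powr (\<sigma> + 2))"
proof -
  define P where "P = \<bar>a0\<bar> + 1"
  define c2 where "c2 = (\<bar>c0\<bar> + \<bar>\<beta>\<bar>) * L"
  have "0 \<le> P" "0 \<le> c2" using L by (auto simp: P_def c2_def)
  have "\<forall>\<^sub>F t in at_right 0. \<bar>fp t\<bar> < P"
    using order_tendstoD(2)[OF tendsto_rabs[OF fp_tendsto]] by (simp add: P_def)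
  then have "\<forall>\<^sub>F t in at_right 0. t < d \<and> \<bar>fp t - 0\<bar> \<le> P \<and> \<bar>Dl t\<bar> \<le> L * \<bar>D t\<bar>"
    using eventually_at_right_0_Ioo[OF d] Dl_le by eventually_elim auto
  then have "\<forall>\<^sub>F x in at_right 0. \<forall>t\<in>{0<..x}. t < d \<and> \<bar>fp t - 0\<bar> \<le> P \<and> \<bar>Dl t\<bar> \<le> L * \<bar>D t\<bar>"
    by (rule eventually_at_right_0_initial_segment)
  moreover have "\<forall>\<^sub>F x in at_right 0. c2 * x\<^sup>2 < 1 / 2"
  proof -
    have "((\<lambda>x. c2 * x\<^sup>2) \<longlongrightarrow> 0) (at_right (0::real))"
      by (auto intro!: tendsto_eq_intros)
    then show ?thesis by (rule order_tendstoD) simp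
  qed
  moreover note eventually_at_right_less[of "0::real"]
  ultimately have "\<forall>\<^sub>F x in at_right 0. \<bar>D x\<bar> \<le> 2 * P * x powr (\<sigma> + 2)"
  proof eventually_elim
    case (elim x)
    then have x: "0 < x" "x < d" by auto
    have "\<bar>D x\<bar> \<le> 2 * (x powr \<sigma> * P * x\<^sup>2)"
    proof (rule abs_le_by_absorption[where D = D and x = x])
      show "continuous_on {0..x} D"
        by (rule continuous_on_subset[OF D_cont]) (use x in auto)
      show "\<bar>D t\<bar> \<le> x powr \<sigma> * P * x\<^sup>2 + c2 * x\<^sup>2 * M"
        if M: "\<And>s. s \<in> {0..x} \<Longrightarrow> \<bar>D s\<bar> \<le> M" and t: "t \<in> {0..x}" for M t
      proof -
        have "0 \<le> M" using M[of 0] x by force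
        show ?thesis
        proof (cases "t = 0")
          case True
          then show ?thesis using D_0 \<open>0 \<le> M\<close> \<open>0 \<le> P\<close> \<open>0 \<le> c2\<close> by simp
        next
          case False
          with t have t: "0 < t" "t \<le> x" by auto
          have "\<bar>D t - 0 / ((\<sigma> + 2) * (\<sigma> + real N)) * t powr (\<sigma> + 2)\<bar>
              \<le> (t powr \<sigma> * P + (\<bar>c0\<bar> + \<bar>\<beta>\<bar>) * (L * M)) * t\<^sup>2"
          proof (rule D_minus_power_le)
            show "\<bar>Dl s\<bar> \<le> L * M" if "0 < s" "s < t" for s
            proof -
              have "\<bar>Dl s\<bar> \<le> L * \<bar>D s\<bar>" using elim that t by auto
              also have "\<dots> \<le> L * M" using M[of s] that t L by (auto intro: mult_left_mono)
              finally show ?thesis .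
            qed
          qed (use elim t \<open>0 \<le> P\<close> \<open>0 \<le> M\<close> L in auto)
          also have "\<dots> = (t powr \<sigma> * P + c2 * M) * t\<^sup>2"
            by (simp add: c2_def mult.assoc)
          also have "\<dots> \<le> (x powr \<sigma> * P + c2 * M) * x\<^sup>2"
            using t \<sigma> \<open>0 \<le> P\<close> \<open>0 \<le> M\<close> \<open>0 \<le> c2\<close>
            by (intro mult_mono add_mono mult_right_mono power_mono powr_mono2) auto
          finally show ?thesis by (simp add: algebra_simps)
        qed
      qed
    qed (use x elim in auto)
    then show ?case using x by (simp add: powr_add powr_numeral algebra_simps)
  qed
  then show ?thesis
    by (intro bigoI[where c = "2 * P"]) (auto elim!: eventually_mono)
qed

lemma D_smallo:
  "(\<lambda>x. D x - a0 / ((\<sigma> + 2) * (\<sigma> + real N)) * x powr (\<sigma> + 2)) \<in> o[at_right 0](\<lambda>x. x powr (\<sigma> + 2))"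
proof (rule landau_o.smallI)
  fix e :: real assume e: "0 < e"
  obtain K where K: "0 < K" "\<forall>\<^sub>F t in at_right 0. norm (D t) \<le> K * norm (t powr (\<sigma> + 2))"
    using landau_o.bigE[OF D_bigo] by blast
  define c3 where "c3 = (\<bar>c0\<bar> + \<bar>\<beta>\<bar>) * L * K"
  have "((\<lambda>t. \<bar>fp t - a0\<bar>) \<longlongrightarrow> 0) (at_right 0)"
    using fp_tendsto by (intro tendsto_rabs_zero LIM_zero)
  then have "\<forall>\<^sub>F t in at_right 0. \<bar>fp t - a0\<bar> < e / 2"
    by (rule order_tendstoD) (use e in simp)
  then have "\<forall>\<^sub>F t in at_right 0. t < d \<and> \<bar>fp t - a0\<bar> \<le> e / 2 \<and> \<bar>Dl t\<bar> \<le> L * \<bar>D t\<bar>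
      \<and> \<bar>D t\<bar> \<le> K * t powr (\<sigma> + 2)"
    using eventually_at_right_0_Ioo[OF d] Dl_le K(2) by eventually_elim auto
  then have "\<forall>\<^sub>F x in at_right 0. \<forall>t\<in>{0<..x}. t < d \<and> \<bar>fp t - a0\<bar> \<le> e / 2
      \<and> \<bar>Dl t\<bar> \<le> L * \<bar>D t\<bar> \<and> \<bar>D t\<bar> \<le> K * t powr (\<sigma> + 2)"
    by (rule eventually_at_right_0_initial_segment)
  moreover have "\<forall>\<^sub>F x in at_right 0. c3 * x\<^sup>2 < e / 2"
  proof -
    have "((\<lambda>x. c3 * x\<^sup>2) \<longlongrightarrow> 0) (at_right (0::real))"
      by (auto intro!: tendsto_eq_intros)
    then show ?thesis by (rule order_tendstoD) (use e in simp)
  qed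
  moreover note eventually_at_right_less[of "0::real"]
  ultimately show "\<forall>\<^sub>F x in at_right 0. norm (D x - a0 / ((\<sigma> + 2) * (\<sigma> + real N)) * x powr (\<sigma> + 2))
      \<le> e * norm (x powr (\<sigma> + 2))"
  proof eventually_elim
    case (elim x)
    then have x: "0 < x" "x < d" by auto
    have "\<bar>D x - a0 / ((\<sigma> + 2) * (\<sigma> + real N)) * x powr (\<sigma> + 2)\<bar>
        \<le> (x powr \<sigma> * (e / 2) + (\<bar>c0\<bar> + \<bar>\<beta>\<bar>) * (L * K * x powr (\<sigma> + 2))) * x\<^sup>2"
    proof (rule D_minus_power_le)
      show "\<bar>Dl t\<bar> \<le> L * K * x powr (\<sigma> + 2)" if t: "0 < t" "t < x" for t
      proof -
        have "\<bar>Dl t\<bar> \<le> L * \<bar>D t\<bar>" using elim t by auto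
        also have "\<dots> \<le> L * (K * t powr (\<sigma> + 2))"
          using elim t L by (intro mult_left_mono) auto
        also have "\<dots> \<le> L * (K * x powr (\<sigma> + 2))"
          using t \<sigma> L K(1) by (intro mult_left_mono powr_mono2) auto
        finally show ?thesis by (simp add: mult.assoc)
      qed
    qed (use elim e L K(1) in auto)
    also have "\<dots> = x powr (\<sigma> + 2) * (e / 2 + c3 * x\<^sup>2)"
      using x by (simp add: c3_def powr_add powr_numeral algebra_simps)
    also have "\<dots> \<le> x powr (\<sigma> + 2) * e"
      using elim by (intro mult_left_mono) auto
    finally show ?case by (simp add: mult.commute)
  qed
qed

end

lemma eventually_powr_lipschitz:
  fixes W w :: "real \<Rightarrow> real"
  assumes W: "(W \<longlongrightarrow> c) F" and w: "(w \<longlongrightarrow> c) F" and c: "0 < c" and m: "1 \<le> m"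
  shows "\<forall>\<^sub>F t in F. \<bar>W t powr (1 / m) - w t powr (1 / m)\<bar> \<le> 1 / m * (c / 2) powr (1 / m - 1) * \<bar>W t - w t\<bar>"
proof -
  have "\<forall>\<^sub>F t in F. c / 2 < W t" "\<forall>\<^sub>F t in F. c / 2 < w t"
    using order_tendstoD(1)[OF W, of "c / 2"] order_tendstoD(1)[OF w, of "c / 2"] c by auto
  then show ?thesis
  proof eventually_elim
    case (elim t)
    show ?case by (rule powr_lipschitz_above) (use elim c m in auto)
  qed
qed

lemma profile_powr_difference_smallo:
  assumes N: "N \<ge> 1" and m: "1 \<le> m" and \<sigma>: "0 < \<sigma>" and A: "0 < A"
    and f_sol: "is_profile N m \<sigma> p 1 A f xm" and \<phi>_sol: "is_profile N m \<sigma> p 0 A \<phi> \<delta>"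
  shows "(\<lambda>x. f x powr m - \<phi> x powr m - A powr p / ((\<sigma> + 2) * (\<sigma> + real N)) * x powr (\<sigma> + 2))
           \<in> o[at_right 0](\<lambda>x. x powr (\<sigma> + 2))"
proof -
  define d where "d = min xm \<delta>"
  have d: "0 < d" "d \<le> xm" "d \<le> \<delta>"
    using f_sol \<phi>_sol by (auto simp: d_def is_profile_def)
  define S where "S = {0..<d}"
  define \<alpha> \<beta> where "\<alpha> = alpha m \<sigma> p" and "\<beta> = beta m \<sigma> p"
  obtain F1 U1 U2 where "f 0 = A" and f_pos: "\<forall>x\<in>S. 0 < f x"
    and f': "\<forall>x\<in>S. (f has_real_derivative F1 x) (at x within S)"
    and W': "\<forall>x\<in>S. ((\<lambda>x. f x powr m) has_real_derivative U1 x) (at x within S)"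
    and U1': "\<forall>x\<in>S. (U1 has_real_derivative U2 x) (at x within S)"
    and "continuous_on S U2" and "U1 0 = 0"
    and f_ode: "\<forall>x. 0 < x \<and> x < d \<longrightarrow> U2 x + (real N - 1) / x * U1 x + \<alpha> * f x
        + \<beta> * x * F1 x - 1 * x powr \<sigma> * f x powr p = 0"
    unfolding S_def \<alpha>_def \<beta>_def by (rule is_profile_on_Ico[OF f_sol d(1,2)])
  obtain G1 u1 u2 where "\<phi> 0 = A" and \<phi>_pos: "\<forall>x\<in>S. 0 < \<phi> x"
    and \<phi>': "\<forall>x\<in>S. (\<phi> has_real_derivative G1 x) (at x within S)"
    and w': "\<forall>x\<in>S. ((\<lambda>x. \<phi> x powr m) has_real_derivative u1 x) (at x within S)"
    and u1': "\<forall>x\<in>S. (u1 has_real_derivative u2 x) (at x within S)"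
    and "continuous_on S u2" and "u1 0 = 0"
    and \<phi>_ode: "\<forall>x. 0 < x \<and> x < d \<longrightarrow> u2 x + (real N - 1) / x * u1 x + \<alpha> * \<phi> x
        + \<beta> * x * G1 x - 0 * x powr \<sigma> * \<phi> x powr p = 0"
    unfolding S_def \<alpha>_def \<beta>_def by (rule is_profile_on_Ico[OF \<phi>_sol d(1,3)])
  have at_interior: "at t within S = at t" if "0 < t" "t < d" for t
    using that by (simp add: S_def at_within_Ico_interior)
  have cont: "continuous_on S f" "continuous_on S \<phi>" "continuous_on S (\<lambda>x. f x powr m)"
      "continuous_on S (\<lambda>x. \<phi> x powr m)" "continuous_on S U1" "continuous_on S u1"
    using f' \<phi>' W' w' U1' u1' by (auto intro: DERIV_continuous_on)
  have lim: "(g \<longlongrightarrow> g 0) (at_right 0)" if "continuous_on S g" for g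
    using continuous_on_Ico_tendsto_at_right_0[OF d(1)] that by (simp add: S_def)
  define flux where "flux h h1 t = t ^ (N - 1) * h1 t + \<beta> * t ^ N * h t" for h h1 :: "real \<Rightarrow> real" and t
  interpret profile_difference N \<sigma> \<beta> "\<beta> * real N - \<alpha>" "1 / m * (A powr m / 2) powr (1 / m - 1)"
      "A powr p" d "\<lambda>x. f x powr m - \<phi> x powr m" "\<lambda>t. U1 t - u1 t" "\<lambda>t. f t - \<phi> t"
      "\<lambda>t. flux f U1 t - flux \<phi> u1 t" "\<lambda>t. f t powr p"
  proof
    show "continuous_on {0..<d} (\<lambda>x. f x powr m - \<phi> x powr m)"
      using cont by (auto simp: S_def intro: continuous_intros)
    show "continuous_on {0..<d} (\<lambda>t. flux f U1 t - flux \<phi> u1 t)"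
      using cont by (auto simp: S_def flux_def intro!: continuous_intros)
    show "flux f U1 0 - flux \<phi> u1 0 = 0"
      using N \<open>U1 0 = 0\<close> \<open>u1 0 = 0\<close> by (simp add: flux_def)
    show "((\<lambda>x. f x powr m - \<phi> x powr m) has_real_derivative U1 t - u1 t) (at t)"
      if "0 < t" "t < d" for t
    proof -
      have "((\<lambda>x. f x powr m) has_real_derivative U1 t) (at t within S)"
        "((\<lambda>x. \<phi> x powr m) has_real_derivative u1 t) (at t within S)"
        using W' w' that by (auto simp: S_def)
      then show ?thesis using at_interior[OF that] by (auto intro: DERIV_diff)
    qed
    show "((\<lambda>t. flux f U1 t - flux \<phi> u1 t) has_real_derivative
        t ^ (N - 1) * (t powr \<sigma> * f t powr p + (\<beta> * real N - \<alpha>) * (f t - \<phi> t))) (at t)"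
      if t: "0 < t" "t < d" for t
    proof -
      have tS: "t \<in> S" using t by (simp add: S_def)
      have "(flux f U1 has_real_derivative t ^ (N - 1) * (1 * t powr \<sigma> * f t powr p + (\<beta> * real N - \<alpha>) * f t)) (at t)"
        unfolding flux_def[abs_def] using f' U1' tS f_ode t at_interior[OF t]
        by (intro profile_flux_has_real_derivative N) auto
      moreover have "(flux \<phi> u1 has_real_derivative t ^ (N - 1) * (0 * t powr \<sigma> * \<phi> t powr p + (\<beta> * real N - \<alpha>) * \<phi> t)) (at t)"
        unfolding flux_def[abs_def] using \<phi>' u1' tS \<phi>_ode t at_interior[OF t]
        by (intro profile_flux_has_real_derivative N) auto
      ultimately show ?thesis
        by (auto dest: DERIV_diff simp: algebra_simps)
    qed
    show "flux f U1 t - flux \<phi> u1 t = t ^ (N - 1) * (U1 t - u1 t) + \<beta> * t ^ N * (f t - \<phi> t)" for t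
      by (simp add: flux_def algebra_simps)
    have "\<forall>\<^sub>F t in at_right 0. \<bar>(f t powr m) powr (1 / m) - (\<phi> t powr m) powr (1 / m)\<bar>
        \<le> 1 / m * (A powr m / 2) powr (1 / m - 1) * \<bar>f t powr m - \<phi> t powr m\<bar>"
      using lim[OF cont(3)] lim[OF cont(4)] \<open>f 0 = A\<close> \<open>\<phi> 0 = A\<close> A m
      by (intro eventually_powr_lipschitz) auto
    then show "\<forall>\<^sub>F t in at_right 0. \<bar>f t - \<phi> t\<bar>
        \<le> 1 / m * (A powr m / 2) powr (1 / m - 1) * \<bar>f t powr m - \<phi> t powr m\<bar>"
      using eventually_at_right_0_Ioo[OF d(1)]
    proof eventually_elim
      case (elim t)
      then have "0 < f t" "0 < \<phi> t" using f_pos \<phi>_pos by (auto simp: S_def)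
      then show ?case using elim m by (simp add: powr_powr)
    qed
    have "f x \<noteq> 0" if "x \<in> S" for x using f_pos that by force
    then have "continuous_on S (\<lambda>x. f x powr p)"
      using cont(1) by (auto intro!: continuous_intros)
    then show "((\<lambda>t. f t powr p) \<longlongrightarrow> A powr p) (at_right 0)"
      using lim \<open>f 0 = A\<close> by auto
  qed (use N \<sigma> d m \<open>f 0 = A\<close> \<open>\<phi> 0 = A\<close> in auto)
  show ?thesis using D_smallo by simp
qed

lemma power_smallo_powr_at_right_0:
  assumes "a < real k"
  shows "(\<lambda>x::real. x ^ k) \<in> o[at_right 0](\<lambda>x. x powr a)"
proof (rule smalloI_tendsto)
  have "((\<lambda>x::real. x powr (real k - a)) \<longlongrightarrow> 0) (at_right 0)"
    using assms by (intro tendsto_zero_powrI tendsto_ident_at tendsto_const)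
      (auto intro: eventually_mono[OF eventually_at_right_less])
  moreover have "\<forall>\<^sub>F x in at_right 0. x powr (real k - a) = x ^ k / x powr a"
    using eventually_at_right_less[of "0::real"]
    by eventually_elim (simp add: powr_diff powr_realpow)
  ultimately show "((\<lambda>x. x ^ k / x powr a) \<longlongrightarrow> 0) (at_right 0)"
    by (rule Lim_transform_eventually)
  show "\<forall>\<^sub>F x in at_right 0. x powr a \<noteq> 0"
    using eventually_at_right_less[of "0::real"] by eventually_elim simp
qed

lemma ceiling_minus_one_bounds:
  fixes \<sigma> :: real
  assumes "0 < \<sigma>"
  shows "\<sigma> \<le> real (nat (\<lceil>\<sigma>\<rceil> - 1)) + 1"
    and "\<sigma> \<notin> \<nat> \<Longrightarrow> \<sigma> < real (nat (\<lceil>\<sigma>\<rceil> - 1)) + 1"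
proof -
  have ceil: "real (nat (\<lceil>\<sigma>\<rceil> - 1)) + 1 = of_int \<lceil>\<sigma>\<rceil>"
    using assms by (simp add: of_nat_diff)
  then show "\<sigma> \<le> real (nat (\<lceil>\<sigma>\<rceil> - 1)) + 1" by simp
  assume "\<sigma> \<notin> \<nat>"
  moreover have "\<sigma> \<in> \<nat>" if "of_int \<lceil>\<sigma>\<rceil> = \<sigma>"
  proof -
    have "0 \<le> \<lceil>\<sigma>\<rceil>" using assms by linarith
    then have "\<sigma> = real (nat \<lceil>\<sigma>\<rceil>)" using that by (simp only: of_nat_nat)
    then show ?thesis by (metis of_nat_in_Nats)
  qed
  ultimately show "\<sigma> < real (nat (\<lceil>\<sigma>\<rceil> - 1)) + 1"
    using ceil le_of_int_ceiling[of \<sigma>] by linarith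
qed

theorem lemma4p2:
  fixes N :: nat and m \<sigma> p A xm \<delta> :: real and f \<phi> :: "real \<Rightarrow> real"
  assumes "N \<ge> 1" and "m > 1" and "\<sigma> > 0" and "p > m" and "A > 0"
    and f_sol: "is_profile N m \<sigma> p 1 A f xm"
    and phi_sol: "is_profile N m \<sigma> p 0 A \<phi> \<delta>"
  defines "k0 \<equiv> nat (\<lceil>\<sigma>\<rceil> - 1)"
    and "B \<equiv> taylor_coeff0 (\<lambda>\<xi>. \<phi> \<xi> powr m)"
  shows "(\<sigma> \<notin> \<nat> \<longrightarrow>
           (\<lambda>\<xi>. f \<xi> powr m - (\<Sum>j\<le>k0 + 2. B j * \<xi> ^ j)
                 - A powr p / ((\<sigma> + 2) * (\<sigma> + real N)) * \<xi> powr (\<sigma> + 2))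
           \<in> o[at_right 0](\<lambda>\<xi>. \<xi> powr (\<sigma> + 2)))
       \<and> (\<sigma> \<in> \<nat> \<longrightarrow>
           (\<lambda>\<xi>. f \<xi> powr m - (\<Sum>j\<le>k0 + 3. B j * \<xi> ^ j)
                 - A powr p / ((\<sigma> + 2) * (\<sigma> + real N)) * \<xi> powr (\<sigma> + 2))
           \<in> o[at_right 0](\<lambda>\<xi>. \<xi> powr (\<sigma> + 2)))"
proof -
  have \<delta>: "0 < \<delta>" using phi_sol by (simp add: is_profile_def)
  have expansion: "(\<lambda>\<xi>. f \<xi> powr m - (\<Sum>j\<le>K. B j * \<xi> ^ j)
      - A powr p / ((\<sigma> + 2) * (\<sigma> + real N)) * \<xi> powr (\<sigma> + 2)) \<in> o[at_right 0](\<lambda>\<xi>. \<xi> powr (\<sigma> + 2))"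
    if K: "\<sigma> + 2 < real (Suc K)" for K
  proof -
    have "(\<lambda>\<xi>. \<phi> \<xi> powr m - (\<Sum>j\<le>K. B j * \<xi> ^ j)) \<in> O[at_right 0](\<lambda>\<xi>. \<xi> ^ Suc K)"
      using Ck_on_taylor_bigo[OF \<delta> is_profile_powr_Ck_on[OF assms(1) _ phi_sol]] assms(2)
      by (simp add: B_def taylor_coeff0_eq)
    also have "(\<lambda>\<xi>. \<xi> ^ Suc K) \<in> o[at_right 0](\<lambda>\<xi>. \<xi> powr (\<sigma> + 2))"
      by (rule power_smallo_powr_at_right_0[OF K])
    finally have taylor: "(\<lambda>\<xi>. \<phi> \<xi> powr m - (\<Sum>j\<le>K. B j * \<xi> ^ j)) \<in> o[at_right 0](\<lambda>\<xi>. \<xi> powr (\<sigma> + 2))" .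
    have "(\<lambda>\<xi>. f \<xi> powr m - \<phi> \<xi> powr m - A powr p / ((\<sigma> + 2) * (\<sigma> + real N)) * \<xi> powr (\<sigma> + 2))
        \<in> o[at_right 0](\<lambda>\<xi>. \<xi> powr (\<sigma> + 2))"
      using profile_powr_difference_smallo[OF assms(1) _ assms(3,5) f_sol phi_sol] assms(2) by simp
    from sum_in_smallo(1)[OF this taylor] show ?thesis
      by (simp add: algebra_simps)
  qed
  show ?thesis
  proof (intro conjI impI)
    assume "\<sigma> \<notin> \<nat>"
    then show "(\<lambda>\<xi>. f \<xi> powr m - (\<Sum>j\<le>k0 + 2. B j * \<xi> ^ j)
        - A powr p / ((\<sigma> + 2) * (\<sigma> + real N)) * \<xi> powr (\<sigma> + 2)) \<in> o[at_right 0](\<lambda>\<xi>. \<xi> powr (\<sigma> + 2))"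
      using ceiling_minus_one_bounds(2)[OF assms(3)] by (intro expansion) (simp add: k0_def)
  next
    show "(\<lambda>\<xi>. f \<xi> powr m - (\<Sum>j\<le>k0 + 3. B j * \<xi> ^ j)
        - A powr p / ((\<sigma> + 2) * (\<sigma> + real N)) * \<xi> powr (\<sigma> + 2)) \<in> o[at_right 0](\<lambda>\<xi>. \<xi> powr (\<sigma> + 2))"
      using ceiling_minus_one_bounds(1)[OF assms(3)] by (intro expansion) (simp add: k0_def)
  qed
qed

end
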